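(* Let $n \ge 2m \ge 2$ and let $J(n,m)$ be the Johnson graph, with intersection numbers $c_i = i^2$ and $b_i=(m-i)(n-m-i)$ for $i=0,1,\ldots,m$. Let $A$ and $D$ be its adjacency matrix and distance matrix (same vertex ordering). Let $k_j=\binom{m}{j}\binom{n-m}{j}$ for $j=0,1,\ldots,m$ and $s=\sum_{j=0}^{m} j k_j$. Define $$p(x)=s\left\{ \prod_{i=1}^m\frac{x-b_{i}+i}{b_{0}-b_{i}+i}- \frac{1}{n-1} \prod_{\substack{i=0\\ i\neq1}}^m \frac{x-b_{i}+i}{b_{1}-b_{i}+i-1}\right\}.$$ Then $D=p(A)$.
   Context: The Johnson graph $J(n,m)$ has as vertices all $m$-element subsets of an $n$-element set, two vertices being adjacent if and only if they intersect in exactly $m-1$ elements. The distance matrix of a connected graph has $(u,v)$ entry equal to the length of a shortest $u$–$v$ path. The intersection numbers of a distance regular graph: for vertices $x,y$ at distance $i$, $c_i$ (resp. $b_i$) is the number of neighbours of $y$ at distance $i-1$ (resp. $i+1$) from $x$. *)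

theory Defs
  imports Main "HOL-Computational_Algebra.Polynomial"
begin

definition johnson_vertices :: "nat \<Rightarrow> nat \<Rightarrow> nat set set" where
  "johnson_vertices n m = {X. X \<subseteq> {0..<n} \<and> card X = m}"

definition johnson_adj :: "nat \<Rightarrow> nat \<Rightarrow> nat set \<Rightarrow> nat set \<Rightarrow> bool" where
  "johnson_adj n m X Y \<longleftrightarrow> X \<in> johnson_vertices n m \<and> Y \<in> johnson_vertices n m
      \<and> card (X \<inter> Y) = m - 1"

definition johnson_dist :: "nat \<Rightarrow> nat \<Rightarrow> nat set \<Rightarrow> nat set \<Rightarrow> nat" where
  "johnson_dist n m X Y = (LEAST k. (johnson_adj n m ^^ k) X Y)"

definition adj_matrix :: "nat \<Rightarrow> nat \<Rightarrow> nat set \<Rightarrow> nat set \<Rightarrow> real" where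
  "adj_matrix n m X Y = (if johnson_adj n m X Y then 1 else 0)"

definition dist_matrix :: "nat \<Rightarrow> nat \<Rightarrow> nat set \<Rightarrow> nat set \<Rightarrow> real" where
  "dist_matrix n m X Y = real (johnson_dist n m X Y)"

definition mat_mult :: "'v set \<Rightarrow> ('v \<Rightarrow> 'v \<Rightarrow> real) \<Rightarrow> ('v \<Rightarrow> 'v \<Rightarrow> real) \<Rightarrow> 'v \<Rightarrow> 'v \<Rightarrow> real" where
  "mat_mult V A B = (\<lambda>u v. \<Sum>w\<in>V. A u w * B w v)"

definition mat_id :: "'v \<Rightarrow> 'v \<Rightarrow> real" where
  "mat_id = (\<lambda>u v. if u = v then 1 else 0)"

fun mat_pow :: "'v set \<Rightarrow> ('v \<Rightarrow> 'v \<Rightarrow> real) \<Rightarrow> nat \<Rightarrow> 'v \<Rightarrow> 'v \<Rightarrow> real" where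
  "mat_pow V A 0 = mat_id"
| "mat_pow V A (Suc k) = mat_mult V (mat_pow V A k) A"

definition poly_mat :: "'v set \<Rightarrow> real poly \<Rightarrow> ('v \<Rightarrow> 'v \<Rightarrow> real) \<Rightarrow> 'v \<Rightarrow> 'v \<Rightarrow> real" where
  "poly_mat V p A = (\<lambda>u v. \<Sum>i\<le>degree p. coeff p i * mat_pow V A i u v)"

definition jb :: "nat \<Rightarrow> nat \<Rightarrow> nat \<Rightarrow> real" where
  "jb n m i = (real m - real i) * (real n - real m - real i)"

definition jk :: "nat \<Rightarrow> nat \<Rightarrow> nat \<Rightarrow> real" where
  "jk n m j = real (m choose j) * real ((n - m) choose j)"

definition js :: "nat \<Rightarrow> nat \<Rightarrow> real" where
  "js n m = (\<Sum>j=0..m. real j * jk n m j)"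

definition johnson_p :: "nat \<Rightarrow> nat \<Rightarrow> real poly" where
  "johnson_p n m = smult (js n m)
     ((\<Prod>i\<in>{1..m}. smult (1 / (jb n m 0 - jb n m i + real i)) [: real i - jb n m i, 1 :])
      - smult (1 / (real n - 1))
         (\<Prod>i\<in>{0..m} - {1}. smult (1 / (jb n m 1 - jb n m i + real i - 1)) [: real i - jb n m i, 1 :]))"

end

theory Submission
  imports Defs
begin

(* Write C_t for the matrix C_t(X, Y) = binom(|X \<inter> Y|, t); thus J = C_0 is the all-ones matrix
   and the distance matrix is D = m J - C_1. The neighbours of Y arise by swapping one element of Y
   for one outside Y, and counting how such a swap changes |X \<inter> Y| gives
   C_t A = (b_t - t) C_t + (m - t + 1)^2 C_(t-1). So C_t (A - b_t + t) = (m - t + 1)^2 C_(t-1),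
   and starting from C_m = I the two products in p evaluate to (m!)^2 J and
   ((m-1)!)^2 (m^2 J - n C_1). By Vandermonde s = m binom(n-1, m), and the two scalar coefficients
   of p reduce to m (n - m) / n and -1 / n, whence p(A) = m J - C_1 = D. *)

lemma poly_mat_eq_sum:
  assumes "degree p \<le> N"
  shows "poly_mat V p A u v = (\<Sum>i\<le>N. coeff p i * mat_pow V A i u v)"
  unfolding poly_mat_def
  by (rule sum.mono_neutral_left) (use assms in \<open>auto simp: coeff_eq_0\<close>)

lemma poly_mat_add: "poly_mat V (p + q) A u v = poly_mat V p A u v + poly_mat V q A u v"
proof -
  define N where "N = max (degree p) (degree q)"
  have "degree (p + q) \<le> N" "degree p \<le> N" "degree q \<le> N"
    by (auto simp: N_def degree_add_le)
  then show ?thesis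
    by (simp add: poly_mat_eq_sum[of _ N] distrib_right sum.distrib)
qed

lemma poly_mat_smult: "poly_mat V (smult c p) A u v = c * poly_mat V p A u v"
  by (simp add: poly_mat_eq_sum[of "smult c p" "degree p"] poly_mat_def sum_distrib_left mult.assoc)

lemma poly_mat_diff: "poly_mat V (p - q) A u v = poly_mat V p A u v - poly_mat V q A u v"
proof -
  have "p - q = p + smult (-1) q" by simp
  then show ?thesis by (simp only: poly_mat_add poly_mat_smult)
qed

lemma poly_mat_one: "poly_mat V 1 A u v = mat_id u v"
  by (simp add: poly_mat_def)

lemma poly_mat_pCons_0:
  "poly_mat V (pCons 0 q) A u v = (\<Sum>w\<in>V. poly_mat V q A u w * A w v)"
proof -
  have "poly_mat V (pCons 0 q) A u v = (\<Sum>i\<le>Suc (degree q). coeff (pCons 0 q) i * mat_pow V A i u v)"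
    by (rule poly_mat_eq_sum) (simp add: degree_pCons_le)
  also have "\<dots> = (\<Sum>i\<le>degree q. \<Sum>w\<in>V. coeff q i * mat_pow V A i u w * A w v)"
    by (simp only: sum.atMost_Suc_shift) (simp add: mat_mult_def sum_distrib_left mult.assoc)
  also have "\<dots> = (\<Sum>w\<in>V. poly_mat V q A u w * A w v)"
    by (subst sum.swap) (simp add: poly_mat_def sum_distrib_right)
  finally show ?thesis .
qed

lemma poly_mat_linear_mult:
  "poly_mat V ([:c, 1:] * q) A u v = c * poly_mat V q A u v + (\<Sum>w\<in>V. poly_mat V q A u w * A w v)"
proof -
  have "[:c, 1:] * q = smult c q + pCons 0 q" by simp
  then show ?thesis by (simp add: poly_mat_add poly_mat_smult poly_mat_pCons_0)
qed

lemma johnson_vertexD: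
  assumes "X \<in> johnson_vertices n m"
  shows "finite X" "card X = m" "X \<subseteq> {0..<n}"
  using assms finite_subset by (auto simp: johnson_vertices_def)

lemma finite_johnson_vertices: "finite (johnson_vertices n m)"
  unfolding johnson_vertices_def by (rule finite_subset[of _ "Pow {0..<n}"]) auto

lemma card_Diff_johnson_vertices:
  assumes "X \<in> johnson_vertices n m" "Y \<in> johnson_vertices n m"
  shows "card (X - Y) = m - card (X \<inter> Y)"
  using johnson_vertexD[OF assms(1)] by (simp add: card_Diff_subset_Int)

lemma johnson_adj_swap:
  assumes "Y \<in> johnson_vertices n m" "a \<in> Y" "b \<in> {0..<n} - Y"
  shows "johnson_adj n m (insert b (Y - {a})) Y"
proof -
  note Y = johnson_vertexD[OF assms(1)]
  have "0 < m"
    using assms(2) Y(1,2) card_gt_0_iff by blast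
  then have "card (insert b (Y - {a})) = m"
    using assms(2,3) Y(1,2) by (simp add: card_insert_if)
  moreover have "insert b (Y - {a}) \<inter> Y = Y - {a}" "insert b (Y - {a}) \<subseteq> {0..<n}"
    using assms(3) Y(3) by auto
  ultimately show ?thesis
    using assms(1,2) Y(1,2) by (simp add: johnson_adj_def johnson_vertices_def)
qed

lemma johnson_adj_swapE:
  assumes "johnson_adj n m Z Y" "m \<ge> 1"
  obtains a b where "a \<in> Y" "b \<in> {0..<n} - Y" "Z = insert b (Y - {a})"
proof -
  have V: "Z \<in> johnson_vertices n m" "Y \<in> johnson_vertices n m" and ZY: "card (Z \<inter> Y) = m - 1"
    using assms(1) by (auto simp: johnson_adj_def)
  have "card (Y - Z) = 1" "card (Z - Y) = 1"
    using card_Diff_johnson_vertices[OF V(2,1)] card_Diff_johnson_vertices[OF V]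
      ZY assms(2) by (simp_all add: Int_commute)
  then obtain a b where a: "Y - Z = {a}" and b: "Z - Y = {b}"
    by (meson card_1_singletonE)
  have "Z = insert b (Y - {a})"
    using a b by blast
  moreover have "a \<in> Y" "b \<in> {0..<n} - Y"
    using a b johnson_vertexD(3)[OF V(1)] by auto
  ultimately show thesis
    using that by blast
qed

lemma johnson_walk_card_Int:
  assumes "(johnson_adj n m ^^ k) X Y" "m \<ge> 1" "X \<in> johnson_vertices n m"
  shows "m \<le> card (X \<inter> Y) + k"
  using assms(1)
proof (induction k arbitrary: Y)
  case 0
  then show ?case using johnson_vertexD[OF assms(3)] by simp
next
  case (Suc k)
  then obtain Z where walk: "(johnson_adj n m ^^ k) X Z" and adj: "johnson_adj n m Z Y"
    by auto
  obtain a b where "Z = insert b (Y - {a})"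
    using johnson_adj_swapE[OF adj assms(2)] .
  then have "X \<inter> Z \<subseteq> insert b (X \<inter> Y)" by blast
  then have "card (X \<inter> Z) \<le> card (insert b (X \<inter> Y))"
    using johnson_vertexD(1)[OF assms(3)] by (intro card_mono) auto
  also have "\<dots> \<le> card (X \<inter> Y) + 1"
    using johnson_vertexD(1)[OF assms(3)] by (simp add: card_insert_if)
  finally have "card (X \<inter> Z) \<le> card (X \<inter> Y) + 1" .
  then show ?case using Suc.IH[OF walk] by simp
qed

lemma johnson_walk_exists:
  assumes "X \<in> johnson_vertices n m" "Y \<in> johnson_vertices n m"
  shows "(johnson_adj n m ^^ (m - card (X \<inter> Y))) X Y"
  using assms(2)
proof (induction "m - card (X \<inter> Y)" arbitrary: Y)
  case 0
  with johnson_vertexD[OF assms(1)] johnson_vertexD[OF \<open>Y \<in> _\<close>] have "X = Y"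
    by (metis Int_lower1 Int_lower2 card_seteq diff_is_0_eq finite_Int)
  moreover have "m - card (X \<inter> Y) = 0" using "0.hyps" by simp
  ultimately show ?case by simp
next
  case (Suc d Y)
  have "card (Y - X) = Suc d" "card (X - Y) = Suc d"
    using card_Diff_johnson_vertices[OF Suc.prems assms(1)]
      card_Diff_johnson_vertices[OF assms(1) Suc.prems] Suc.hyps(2)
    by (simp_all add: Int_commute)
  then obtain a b where a: "a \<in> Y - X" and b: "b \<in> X - Y"
    by (metis all_not_in_conv card.empty nat.distinct(1))
  define Z where "Z = insert b (Y - {a})"
  have adj: "johnson_adj n m Z Y"
    unfolding Z_def using johnson_adj_swap[OF Suc.prems] a b johnson_vertexD(3)[OF assms(1)] by blast
  then have Z: "Z \<in> johnson_vertices n m" by (simp add: johnson_adj_def)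
  have "X \<inter> Z = insert b (X \<inter> Y)" using a b by (auto simp: Z_def)
  then have "card (X \<inter> Z) = Suc (card (X \<inter> Y))"
    using b johnson_vertexD(1)[OF assms(1)] by simp
  then have "d = m - card (X \<inter> Z)"
    using Suc.hyps(2) by linarith
  then have "(johnson_adj n m ^^ d) X Z"
    using Suc.hyps(1)[OF _ Z] by simp
  with adj show ?case
    unfolding Suc.hyps(2)[symmetric] by auto
qed

lemma johnson_dist_eq:
  assumes "m \<ge> 1" "X \<in> johnson_vertices n m" "Y \<in> johnson_vertices n m"
  shows "johnson_dist n m X Y = m - card (X \<inter> Y)"
  unfolding johnson_dist_def
proof (rule Least_equality)
  show "(johnson_adj n m ^^ (m - card (X \<inter> Y))) X Y"
    using johnson_walk_exists[OF assms(2,3)] .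
  show "m - card (X \<inter> Y) \<le> k" if "(johnson_adj n m ^^ k) X Y" for k
    using johnson_walk_card_Int[OF that assms(1,2)] by simp
qed

lemma johnson_neighbours_bij:
  assumes "m \<ge> 1" "Y \<in> johnson_vertices n m"
  shows "bij_betw (\<lambda>(a, b). insert b (Y - {a})) (Y \<times> ({0..<n} - Y)) {Z. johnson_adj n m Z Y}"
proof (rule bij_betw_imageI)
  show "inj_on (\<lambda>(a, b). insert b (Y - {a})) (Y \<times> ({0..<n} - Y))"
  proof (rule inj_onI, clarify)
    fix a b a' b'
    assume a: "a \<in> Y" "a' \<in> Y" and b: "b \<notin> Y" "b' \<notin> Y"
      and eq: "insert b (Y - {a}) = insert b' (Y - {a'})"
    have "b \<in> insert b' (Y - {a'})"
      using eq by blast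
    then have "b = b'"
      using b(1) by blast
    have "a \<notin> insert b (Y - {a})"
      using a(1) b(1) by blast
    then have "a = a'"
      using eq a by blast
    with \<open>b = b'\<close> show "a = a' \<and> b = b'" by simp
  qed
  show "(\<lambda>(a, b). insert b (Y - {a})) ` (Y \<times> ({0..<n} - Y)) = {Z. johnson_adj n m Z Y}"
  proof
    show "(\<lambda>(a, b). insert b (Y - {a})) ` (Y \<times> ({0..<n} - Y)) \<subseteq> {Z. johnson_adj n m Z Y}"
      using johnson_adj_swap[OF assms(2)] by auto
    show "{Z. johnson_adj n m Z Y} \<subseteq> (\<lambda>(a, b). insert b (Y - {a})) ` (Y \<times> ({0..<n} - Y))"
    proof
      fix Z assume "Z \<in> {Z. johnson_adj n m Z Y}"
      then obtain a b where "a \<in> Y" "b \<in> {0..<n} - Y" "Z = insert b (Y - {a})"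
        using johnson_adj_swapE[OF _ assms(1)] by blast
      then show "Z \<in> (\<lambda>(a, b). insert b (Y - {a})) ` (Y \<times> ({0..<n} - Y))"
        by blast
    qed
  qed
qed

lemma sum_split_by_membership:
  fixes h :: "bool \<Rightarrow> 'b::comm_semiring_1"
  assumes "finite A"
  shows "(\<Sum>a\<in>A. h (a \<in> X)) = of_nat (card (A \<inter> X)) * h True + of_nat (card (A - X)) * h False"
  using sum.Int_Diff[OF assms, of "\<lambda>a. h (a \<in> X)" X] by simp

lemma card_Int_swap:
  assumes "finite X" "a \<in> Y" "b \<notin> Y"
  shows "card (X \<inter> insert b (Y - {a})) = card (X \<inter> Y) - of_bool (a \<in> X) + of_bool (b \<in> X)"
proof -
  have "X \<inter> insert b (Y - {a}) = (if b \<in> X then insert b else id) ((X \<inter> Y) - {a})"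
    using assms(3) by auto
  then show ?thesis
    using assms by (auto simp: card_insert_if)
qed

lemma card_outside_johnson_vertices:
  assumes "X \<in> johnson_vertices n m" "Y \<in> johnson_vertices n m"
  shows "real (card ({0..<n} - Y - X)) = real n + real (card (X \<inter> Y)) - 2 * real m"
proof -
  note X = johnson_vertexD[OF assms(1)] and Y = johnson_vertexD[OF assms(2)]
  have "card (X \<union> Y) + card (X \<inter> Y) = 2 * m"
    using card_Un_Int[OF X(1) Y(1)] X(2) Y(2) by simp
  moreover have "{0..<n} - Y - X = {0..<n} - (X \<union> Y)" by blast
  then have "card ({0..<n} - Y - X) = n - card (X \<union> Y)"
    using X(1,3) Y(1,3) by (simp add: card_Diff_subset)
  moreover have "card (X \<union> Y) \<le> n"
    using card_mono[of "{0..<n}" "X \<union> Y"] X(3) Y(3) by simp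
  ultimately show ?thesis by (simp add: of_nat_diff)
qed

lemma sum_johnson_neighbours:
  fixes g :: "nat \<Rightarrow> real"
  assumes "m \<ge> 1" "X \<in> johnson_vertices n m" "Y \<in> johnson_vertices n m"
  defines "j \<equiv> card (X \<inter> Y)"
  shows "(\<Sum>Z | johnson_adj n m Z Y. g (card (X \<inter> Z)))
       = real j * ((real m - real j) * g j + (real n + real j - 2 * real m) * g (j - 1))
         + (real m - real j) * ((real m - real j) * g (Suc j) + (real n + real j - 2 * real m) * g j)"
proof -
  note X = johnson_vertexD[OF assms(2)] and Y = johnson_vertexD[OF assms(3)]
  define U where "U = {0..<n} - Y"
  have "finite U" by (simp add: U_def)
  have cards: "card (Y \<inter> X) = j" "real (card (Y - X)) = real m - real j"
      "real (card (U \<inter> X)) = real m - real j"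
      "real (card (U - X)) = real n + real j - 2 * real m"
  proof -
    show "card (Y \<inter> X) = j" by (simp add: j_def Int_commute)
    have "j \<le> m" unfolding j_def using X by (metis card_mono inf_le1)
    moreover have "U \<inter> X = X - Y" using X(3) by (auto simp: U_def)
    ultimately show "real (card (Y - X)) = real m - real j" "real (card (U \<inter> X)) = real m - real j"
      using card_Diff_johnson_vertices[OF assms(3,2)] card_Diff_johnson_vertices[OF assms(2,3)]
      by (simp_all add: j_def Int_commute of_nat_diff)
    show "real (card (U - X)) = real n + real j - 2 * real m"
      using card_outside_johnson_vertices[OF assms(2,3)] by (simp add: U_def j_def)
  qed
  have "(\<Sum>Z | johnson_adj n m Z Y. g (card (X \<inter> Z)))
      = (\<Sum>a\<in>Y. \<Sum>b\<in>U. g (card (X \<inter> insert b (Y - {a}))))"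
    using sum.reindex_bij_betw[OF johnson_neighbours_bij[OF assms(1,3)], of "\<lambda>Z. g (card (X \<inter> Z))"]
    by (simp add: U_def sum.cartesian_product split_def)
  also have "\<dots> = (\<Sum>a\<in>Y. \<Sum>b\<in>U. g (j - of_bool (a \<in> X) + of_bool (b \<in> X)))"
    using card_Int_swap[OF X(1)] by (simp add: U_def j_def)
  also have "\<dots> = (\<Sum>a\<in>Y. (real m - real j) * g (j - of_bool (a \<in> X) + 1)
                         + (real n + real j - 2 * real m) * g (j - of_bool (a \<in> X)))"
  proof (rule sum.cong[OF refl])
    fix a
    show "(\<Sum>b\<in>U. g (j - of_bool (a \<in> X) + of_bool (b \<in> X)))
        = (real m - real j) * g (j - of_bool (a \<in> X) + 1)
          + (real n + real j - 2 * real m) * g (j - of_bool (a \<in> X))"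
      using sum_split_by_membership[OF \<open>finite U\<close>, of "\<lambda>\<beta>. g (j - of_bool (a \<in> X) + of_bool \<beta>)" X]
      by (simp add: cards)
  qed
  also have "\<dots> = real j * ((real m - real j) * g j + (real n + real j - 2 * real m) * g (j - 1))
         + (real m - real j) * ((real m - real j) * g (Suc j) + (real n + real j - 2 * real m) * g j)"
    using sum_split_by_membership[of Y "\<lambda>\<alpha>. (real m - real j) * g (j - of_bool \<alpha> + 1)
                         + (real n + real j - 2 * real m) * g (j - of_bool \<alpha>)" X]
    \<comment> \<open>for j = 0 the terms with g (j - 1 + 1) have coefficient 0\<close>
    by (cases "j = 0") (simp_all add: Y(1) cards)
  finally show ?thesis .
qed

lemma binomial_johnson_recurrence:
  fixes j t :: nat
  assumes "t \<ge> 1"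
  shows "real j * ((real m - real j) * real (j choose t) + (real n + real j - 2 * real m) * real ((j - 1) choose t))
         + (real m - real j) * ((real m - real j) * real (Suc j choose t) + (real n + real j - 2 * real m) * real (j choose t))
       = (jb n m t - real t) * real (j choose t) + (real m - real t + 1)^2 * real (j choose (t - 1))"
proof -
  obtain k where t: "t = Suc k" using assms by (cases t) auto
  define x where "x = real (j choose k)"
  define y where "y = real (j choose t)"
  have pascal: "real (Suc j choose t) = x + y"
    by (simp add: t x_def y_def)
  have absorb: "real j * real ((j - 1) choose t) = (real j - real t) * y"
  proof (cases "t \<le> j")
    case True
    have "real j * real ((j - 1) choose t) = real ((j - t) * (j choose t))"
      by (simp only: binomial_absorb_comp of_nat_mult)
    with True show ?thesis by (simp add: y_def of_nat_diff)
  qed (simp add: y_def binomial_eq_0)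
  have shift: "real t * y = (real j - real t + 1) * x"
  proof (cases "k \<le> j")
    case True
    have "real (Suc k) * real (j choose Suc k) = real ((j - k) * (j choose k))"
      by (simp only: binomial_absorption binomial_absorb_comp flip: of_nat_mult)
    with True show ?thesis by (simp add: t x_def y_def of_nat_diff)
  qed (simp add: t x_def y_def binomial_eq_0)
  have "real j * ((real m - real j) * y + (real n + real j - 2 * real m) * real ((j - 1) choose t))
         + (real m - real j) * ((real m - real j) * (x + y) + (real n + real j - 2 * real m) * y)
        - ((jb n m t - real t) * y + (real m - real t + 1)^2 * x)
      = (2 * real m - real j - real t + 1) * (real t * y - (real j - real t + 1) * x)
        + (real n + real j - 2 * real m) * (real j * real ((j - 1) choose t) - (real j - real t) * y)"
    unfolding jb_def by (simp add: algebra_simps power2_eq_square)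
  then show ?thesis
    unfolding pascal[symmetric] shift absorb by (simp add: t x_def y_def)
qed

lemma sum_binomial_card_Int_adj:
  assumes "m \<ge> 1" "X \<in> johnson_vertices n m" "Y \<in> johnson_vertices n m" "t \<ge> 1"
  shows "(\<Sum>W\<in>johnson_vertices n m. real (card (X \<inter> W) choose t) * adj_matrix n m W Y)
       = (jb n m t - real t) * real (card (X \<inter> Y) choose t)
         + (real m - real t + 1)^2 * real (card (X \<inter> Y) choose (t - 1))"
proof -
  have "(\<Sum>W\<in>johnson_vertices n m. real (card (X \<inter> W) choose t) * adj_matrix n m W Y)
      = (\<Sum>W\<in>johnson_vertices n m. if johnson_adj n m W Y then real (card (X \<inter> W) choose t) else 0)"
    by (rule sum.cong) (simp_all add: adj_matrix_def)
  also have "\<dots> = (\<Sum>W\<in>{W \<in> johnson_vertices n m. johnson_adj n m W Y}. real (card (X \<inter> W) choose t))"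
    by (simp add: sum.inter_filter[OF finite_johnson_vertices])
  also have "{W \<in> johnson_vertices n m. johnson_adj n m W Y} = {W. johnson_adj n m W Y}"
    by (auto simp: johnson_adj_def)
  finally show ?thesis
    using sum_johnson_neighbours[OF assms(1-3), of "\<lambda>k. real (k choose t)"]
      binomial_johnson_recurrence[OF assms(4)] by simp
qed

definition jfactor :: "nat \<Rightarrow> nat \<Rightarrow> nat \<Rightarrow> real poly" where
  "jfactor n m i = [: real i - jb n m i, 1 :]"

lemma binomial_card_Int_johnson_vertices:
  assumes "X \<in> johnson_vertices n m" "Y \<in> johnson_vertices n m"
  shows "card (X \<inter> Y) choose m = (if X = Y then 1 else 0)"
proof -
  note X = johnson_vertexD[OF assms(1)] and Y = johnson_vertexD[OF assms(2)]
  have "card (X \<inter> Y) \<le> m" using X by (metis card_mono inf_le1)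
  moreover have "card (X \<inter> Y) = m \<longleftrightarrow> X = Y"
    using X Y by (metis Int_absorb Int_lower1 Int_lower2 card_seteq order_refl)
  ultimately show ?thesis by (auto simp: binomial_eq_0)
qed

lemma poly_mat_prod_jfactor:
  assumes "m \<ge> 1" "t \<le> m" "X \<in> johnson_vertices n m" "Y \<in> johnson_vertices n m"
  shows "poly_mat (johnson_vertices n m) (\<Prod>i\<in>{Suc t..m}. jfactor n m i) (adj_matrix n m) X Y
       = fact (m - t)^2 * real (card (X \<inter> Y) choose t)"
proof -
  let ?V = "johnson_vertices n m" and ?A = "adj_matrix n m"
  have "\<forall>Y\<in>?V. poly_mat ?V (\<Prod>i\<in>{Suc t..m}. jfactor n m i) ?A X Y
       = fact (m - t)^2 * real (card (X \<inter> Y) choose t)"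
    using assms(2)
  proof (induction t rule: inc_induct)
    case base
    show ?case
      using binomial_card_Int_johnson_vertices[OF assms(3)] by (simp add: poly_mat_one mat_id_def)
  next
    case (step t)
    let ?Q = "poly_mat ?V (\<Prod>i\<in>{Suc (Suc t)..m}. jfactor n m i) ?A"
    let ?C = "\<lambda>W k. real (card (X \<inter> W) choose k)"
    have split: "{Suc t..m} = insert (Suc t) {Suc (Suc t)..m}"
      using step.hyps(2) by auto
    have fact_step: "fact (m - t) = real (m - t) * fact (m - Suc t)"
      using step.hyps(2) by (metis Suc_diff_Suc fact_Suc)
    show ?case
    proof
      fix Y assume Y: "Y \<in> ?V"
      have "(\<Prod>i\<in>{Suc t..m}. jfactor n m i)
          = [: real (Suc t) - jb n m (Suc t), 1 :] * (\<Prod>i\<in>{Suc (Suc t)..m}. jfactor n m i)"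
        by (simp add: split jfactor_def)
      then have "poly_mat ?V (\<Prod>i\<in>{Suc t..m}. jfactor n m i) ?A X Y
          = (real (Suc t) - jb n m (Suc t)) * ?Q X Y + (\<Sum>W\<in>?V. ?Q X W * ?A W Y)"
        by (simp only: poly_mat_linear_mult)
      also have "\<dots> = fact (m - Suc t)^2
          * ((real (Suc t) - jb n m (Suc t)) * ?C Y (Suc t) + (\<Sum>W\<in>?V. ?C W (Suc t) * ?A W Y))"
        using step.IH Y by (simp add: sum_distrib_left algebra_simps)
      also have "\<dots> = fact (m - Suc t)^2 * real (m - t)^2 * ?C Y t"
        using sum_binomial_card_Int_adj[OF assms(1,3) Y, of "Suc t"] step.hyps(2)
        by (simp add: of_nat_diff algebra_simps)
      finally show "poly_mat ?V (\<Prod>i\<in>{Suc t..m}. jfactor n m i) ?A X Y = fact (m - t)^2 * ?C Y t"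
        by (simp add: fact_step power_mult_distrib)
    qed
  qed
  then show ?thesis using assms(4) by blast
qed

lemma poly_mat_prod_jfactor_remove_1:
  assumes "m \<ge> 1" "X \<in> johnson_vertices n m" "Y \<in> johnson_vertices n m"
  shows "poly_mat (johnson_vertices n m) (\<Prod>i\<in>{0..m} - {1}. jfactor n m i) (adj_matrix n m) X Y
       = fact (m - 1)^2 * (real m ^ 2 - real n * real (card (X \<inter> Y)))"
proof -
  let ?V = "johnson_vertices n m" and ?A = "adj_matrix n m"
  let ?Q = "poly_mat ?V (\<Prod>i\<in>{Suc 1..m}. jfactor n m i) ?A"
  have "{0..m} - {1} = insert 0 {Suc 1..m}" by auto
  then have "(\<Prod>i\<in>{0..m} - {1}. jfactor n m i) = [: - jb n m 0, 1 :] * (\<Prod>i\<in>{Suc 1..m}. jfactor n m i)"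
    by (simp add: jfactor_def)
  then have "poly_mat ?V (\<Prod>i\<in>{0..m} - {1}. jfactor n m i) ?A X Y
      = - jb n m 0 * ?Q X Y + (\<Sum>W\<in>?V. ?Q X W * ?A W Y)"
    by (simp only: poly_mat_linear_mult)
  also have "\<dots> = fact (m - 1)^2 * (- jb n m 0 * real (card (X \<inter> Y))
      + (\<Sum>W\<in>?V. real (card (X \<inter> W) choose 1) * ?A W Y))"
    using poly_mat_prod_jfactor[OF assms(1) _ assms(2)] assms(1,3)
    by (simp add: sum_distrib_left algebra_simps)
  also have "(\<Sum>W\<in>?V. real (card (X \<inter> W) choose 1) * ?A W Y)
      = (jb n m 1 - 1) * real (card (X \<inter> Y)) + real m ^ 2"
    using sum_binomial_card_Int_adj[OF assms, of 1] by simp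
  also have "- jb n m 0 * real (card (X \<inter> Y)) + ((jb n m 1 - 1) * real (card (X \<inter> Y)) + real m ^ 2)
      = real m ^ 2 - real n * real (card (X \<inter> Y))"
    by (simp add: jb_def algebra_simps)
  finally show ?thesis .
qed

lemma js_eq:
  assumes "m \<le> n"
  shows "js n m = real (m * ((n - 1) choose m))"
proof (cases "m = 0")
  case False
  have absorb: "j * (m choose j) = m * ((m - 1) choose (m - j))" if "j \<le> m" for j
  proof (cases j)
    case (Suc k)
    then have "j * (m choose j) = m * ((m - 1) choose k)"
      using binomial_absorption[of k m] by simp
    also have "(m - 1) choose k = (m - 1) choose (m - j)"
      using Suc that by (subst binomial_symmetric) auto
    finally show ?thesis .
  qed (use False in \<open>simp add: binomial_eq_0\<close>)
  have "(\<Sum>j=0..m. j * ((m choose j) * ((n - m) choose j)))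
      = (\<Sum>j\<le>m. m * (((n - m) choose j) * ((m - 1) choose (m - j))))"
    unfolding atLeast0AtMost
    by (rule sum.cong) (simp_all add: absorb mult.assoc[symmetric] mult.commute[of "(n - m) choose _"])
  also have "\<dots> = m * (\<Sum>j\<le>m. ((n - m) choose j) * ((m - 1) choose (m - j)))"
    by (rule sum_distrib_left[symmetric])
  also have "\<dots> = m * ((n - 1) choose m)"
    using vandermonde[of "n - m" "m - 1" m] assms False by simp
  finally show ?thesis
    unfolding js_def jk_def by (simp flip: of_nat_mult of_nat_sum)
qed (simp add: js_def)

lemma prod_jb_0_diff:
  "(\<Prod>i\<in>{1..m}. jb n m 0 - jb n m i + real i) = fact m * (fact m * real (n choose m))"
proof -
  have "(\<Prod>i\<in>{1..m}. jb n m 0 - jb n m i + real i) = (\<Prod>i\<in>{1..m}. real i * (real n - real i + 1))"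
    by (rule prod.cong) (simp_all add: jb_def algebra_simps)
  also have "\<dots> = (\<Prod>i\<in>{1..m}. real i) * (\<Prod>i\<in>{1..m}. real n - real i + 1)"
    by (rule prod.distrib)
  also have "(\<Prod>i\<in>{1..m}. real i) = fact m"
    by (simp add: fact_prod)
  also have "(\<Prod>i\<in>{1..m}. real n - real i + 1) = (\<Prod>i<m. real n - real i)"
    by (simp add: prod.atLeast1_atMost_eq)
  also have "\<dots> = fact m * real (n choose m)"
    by (simp add: binomial_gbinomial gbinomial_mult_fact lessThan_atLeast0)
  finally show ?thesis .
qed

lemma prod_jb_1_diff:
  assumes "m \<ge> 1"
  shows "(real n - 1) * (\<Prod>i\<in>{0..m} - {1}. jb n m 1 - jb n m i + real i - 1)
       = - (fact (m - 1) * (fact m * ((real n - real m) * real (n choose m))))"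
proof -
  have factors: "(\<Prod>i\<in>{0..m} - {1}. jb n m 1 - jb n m i + real i - 1)
      = (\<Prod>i\<in>{0..m} - {1}. real i - 1) * (\<Prod>i\<in>{0..m} - {1}. real n - real i)"
    by (simp add: jb_def algebra_simps flip: prod.distrib)
  have first: "(\<Prod>i\<in>{0..m} - {1}. real i - 1) = - fact (m - 1)"
  proof -
    have set: "{0..m} - {1} = insert 0 {Suc 1..Suc (m - 1)}"
      using assms by auto
    have "(\<Prod>i\<in>{0..m} - {1}. real i - 1) = - (\<Prod>i\<in>{Suc 1..Suc (m - 1)}. real i - 1)"
      unfolding set by simp
    also have "\<dots> = - fact (m - 1)"
      by (simp only: prod.shift_bounds_cl_Suc_ivl) (simp add: fact_prod)
    finally show ?thesis .
  qed
  have second: "(real n - 1) * (\<Prod>i\<in>{0..m} - {1}. real n - real i)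
      = (real n - real m) * (fact m * real (n choose m))"
  proof -
    have "(real n - 1) * (\<Prod>i\<in>{0..m} - {1}. real n - real i) = (\<Prod>i\<in>{0..m}. real n - real i)"
      using prod.remove[of "{0..m}" 1 "\<lambda>i. real n - real i"] assms by simp
    also have "\<dots> = (real n - real m) * (\<Prod>i<m. real n - real i)"
      by (simp add: atLeast0AtMost flip: lessThan_Suc_atMost)
    also have "(\<Prod>i<m. real n - real i) = fact m * real (n choose m)"
      by (simp add: binomial_gbinomial gbinomial_mult_fact lessThan_atLeast0)
    finally show ?thesis .
  qed
  show ?thesis
    unfolding factors mult.left_commute[of "real n - 1"] first second by simp
qed

lemma johnson_p_eq:
  "johnson_p n m
     = smult (js n m / (\<Prod>i\<in>{1..m}. jb n m 0 - jb n m i + real i)) (\<Prod>i\<in>{1..m}. jfactor n m i)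
       - smult (js n m / ((real n - 1) * (\<Prod>i\<in>{0..m} - {1}. jb n m 1 - jb n m i + real i - 1)))
           (\<Prod>i\<in>{0..m} - {1}. jfactor n m i)"
  unfolding johnson_p_def jfactor_def prod_smult
  by (simp add: prod_dividef smult_diff_right)

lemma johnson_p_coefficients:
  assumes "1 \<le> m" "m < n"
  shows "js n m / (\<Prod>i\<in>{1..m}. jb n m 0 - jb n m i + real i) * fact m ^ 2
           = real m * (real n - real m) / real n"
    and "js n m / ((real n - 1) * (\<Prod>i\<in>{0..m} - {1}. jb n m 1 - jb n m i + real i - 1))
           * fact (m - 1) ^ 2 = - 1 / real n"
proof -
  have C: "real (n choose m) > 0"
    using assms by simp
  have "real n * real ((n - 1) choose m) = real ((n - m) * (n choose m))"
    by (simp only: binomial_absorb_comp of_nat_mult)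
  then have absorb: "real ((n - 1) choose m) = (real n - real m) * real (n choose m) / real n"
    using assms by (simp add: of_nat_diff field_simps)
  have fact_m: "fact m = real m * fact (m - 1)"
    using assms(1) by (simp add: fact_reduce)
  show "js n m / (\<Prod>i\<in>{1..m}. jb n m 0 - jb n m i + real i) * fact m ^ 2
           = real m * (real n - real m) / real n"
    using C assms unfolding js_eq[OF less_imp_le[OF assms(2)]] prod_jb_0_diff of_nat_mult absorb
    by (simp add: field_simps power2_eq_square)
  show "js n m / ((real n - 1) * (\<Prod>i\<in>{0..m} - {1}. jb n m 1 - jb n m i + real i - 1))
           * fact (m - 1) ^ 2 = - 1 / real n"
    using C assms unfolding js_eq[OF less_imp_le[OF assms(2)]] prod_jb_1_diff[OF assms(1)] fact_m of_nat_mult absorb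
    by (simp add: field_simps power2_eq_square)
qed

theorem theorem3p1:
  fixes n m :: nat
  assumes "n \<ge> 2 * m" and "2 * m \<ge> 2"
  shows "\<forall>X\<in>johnson_vertices n m. \<forall>Y\<in>johnson_vertices n m.
           dist_matrix n m X Y
             = poly_mat (johnson_vertices n m) (johnson_p n m) (adj_matrix n m) X Y"
proof (intro ballI)
  fix X Y assume X: "X \<in> johnson_vertices n m" and Y: "Y \<in> johnson_vertices n m"
  let ?V = "johnson_vertices n m" and ?A = "adj_matrix n m" and ?j = "real (card (X \<inter> Y))"
  have m: "1 \<le> m" "m < n" using assms by auto
  have full_prod: "poly_mat ?V (\<Prod>i\<in>{1..m}. jfactor n m i) ?A X Y = fact m ^ 2"
    using poly_mat_prod_jfactor[OF m(1) le0 X Y] by simp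
  have "dist_matrix n m X Y = real m - ?j"
    using card_mono[OF johnson_vertexD(1)[OF X], of "X \<inter> Y"] johnson_vertexD(2)[OF X]
    by (simp add: dist_matrix_def johnson_dist_eq[OF m(1) X Y] of_nat_diff)
  also have "\<dots> = real m * (real n - real m) / real n - (- 1 / real n) * (real m ^ 2 - real n * ?j)"
    using m by (simp add: field_simps power2_eq_square)
  also have "\<dots> = poly_mat ?V (johnson_p n m) ?A X Y"
    by (simp only: johnson_p_eq poly_mat_diff poly_mat_smult full_prod
        poly_mat_prod_jfactor_remove_1[OF m(1) X Y] mult.assoc[symmetric] johnson_p_coefficients[OF m])
  finally show "dist_matrix n m X Y = poly_mat ?V (johnson_p n m) ?A X Y" .
qed

end
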